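(* Consider the optimization problem \[ \min_{d,\{t_n\},\{P_n\},\{Q_n\}} \ \sum_{n=1}^N (P_n t_n + Q_n t_n) + \frac{\kappa L^3 (D-d)^3}{T^2} \] subject to \[ d \le \sum_{n=1}^N D_n^T,\qquad 2\sum_{n=1}^N t_n \le T - \frac{Ld}{f_B},\qquad 0\le d\le D,\quad P_n\ge 0,\ Q_n\ge 0,\ t_n\ge 0\ \ \forall n\in\{1,\dots,N\}, \] where \[ D_n^T = \min\left( t_n W \ln\left(1+\frac{P_n h_n}{\sigma^2 W}\right),\ t_n W\ln\left(1+\frac{Q_n g_n}{\sigma^2 W}\right)\right). \] Then the optimal $P_n$ and $Q_n$ satisfy $P_n h_n = Q_n g_n$ for all $n\in\{1,\dots,N\}$.
   Context: This models a mobile edge computing system with one mobile device, $N$ decode-and-forward relays operating in time-division multiple access, and a base station. All parameters are given positive constants: $N$ (number of relays), $h_n$ (channel gain from the device to relay $n$), $g_n$ (channel gain from relay $n$ to the base station), $W$ (bandwidth), $\sigma^2$ (noise power spectral density), $\kappa$, $L$, $D$, $T$, and $f_B$. The variables are $d$ (offloaded data), $t_n$ (time slot of relay $n$), $P_n$ (device transmit power to relay $n$), and $Q_n$ (transmit power of relay $n$). *)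

theory Defs
  imports Complex_Main
begin

text \<open>Data offloaded through relay n in its TDMA slot (decode-and-forward: min of the two hops).\<close>
definition DT :: "real \<Rightarrow> real \<Rightarrow> real \<Rightarrow> real \<Rightarrow> real \<Rightarrow> real \<Rightarrow> real \<Rightarrow> real" where
  "DT W \<sigma>2 hn gn tn Pn Qn =
     min (tn * W * ln (1 + Pn * hn / (\<sigma>2 * W))) (tn * W * ln (1 + Qn * gn / (\<sigma>2 * W)))"

definition objective :: "nat \<Rightarrow> real \<Rightarrow> real \<Rightarrow> real \<Rightarrow> real
    \<Rightarrow> real \<Rightarrow> (nat \<Rightarrow> real) \<Rightarrow> (nat \<Rightarrow> real) \<Rightarrow> (nat \<Rightarrow> real) \<Rightarrow> real" where
  "objective N \<kappa> L D T d t P Q =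
     (\<Sum>n=1..N. P n * t n + Q n * t n) + \<kappa> * L ^ 3 * (D - d) ^ 3 / T ^ 2"

definition feasible :: "nat \<Rightarrow> (nat \<Rightarrow> real) \<Rightarrow> (nat \<Rightarrow> real) \<Rightarrow> real \<Rightarrow> real \<Rightarrow> real \<Rightarrow> real
    \<Rightarrow> real \<Rightarrow> real \<Rightarrow> real \<Rightarrow> (nat \<Rightarrow> real) \<Rightarrow> (nat \<Rightarrow> real) \<Rightarrow> (nat \<Rightarrow> real) \<Rightarrow> bool" where
  "feasible N h g W \<sigma>2 L D T fB d t P Q \<longleftrightarrow>
     d \<le> (\<Sum>n=1..N. DT W \<sigma>2 (h n) (g n) (t n) (P n) (Q n)) \<and>
     2 * (\<Sum>n=1..N. t n) \<le> T - L * d / fB \<and>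
     0 \<le> d \<and> d \<le> D \<and>
     (\<forall>n\<in>{1..N}. 0 \<le> P n \<and> 0 \<le> Q n \<and> 0 \<le> t n)"

definition optimal :: "nat \<Rightarrow> (nat \<Rightarrow> real) \<Rightarrow> (nat \<Rightarrow> real) \<Rightarrow> real \<Rightarrow> real \<Rightarrow> real \<Rightarrow> real \<Rightarrow> real
    \<Rightarrow> real \<Rightarrow> real \<Rightarrow> real \<Rightarrow> (nat \<Rightarrow> real) \<Rightarrow> (nat \<Rightarrow> real) \<Rightarrow> (nat \<Rightarrow> real) \<Rightarrow> bool" where
  "optimal N h g W \<sigma>2 \<kappa> L D T fB d t P Q \<longleftrightarrow>
     feasible N h g W \<sigma>2 L D T fB d t P Q \<and>
     (\<forall>d' t' P' Q'. feasible N h g W \<sigma>2 L D T fB d' t' P' Q' \<longrightarrow>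
        objective N \<kappa> L D T d t P Q \<le> objective N \<kappa> L D T d' t' P' Q')"

end

theory Submission
  imports Defs
begin

text \<open>If the device-to-relay hop of an active slot carried more than the relay-to-base-station
hop, \<open>P n h n > Q n g n\<close>, the throughput of the slot would be capped by the second hop anyway.
Lowering \<open>P n\<close> to \<open>Q n g n / h n\<close> then keeps the offloaded data, hence feasibility, and
strictly saves energy because \<open>t n > 0\<close>. The opposite inequality is the same argument
with the roles of the two hops exchanged, which leaves the problem invariant.\<close>

lemma DT_swap: "DT W \<sigma>2 h g t P Q = DT W \<sigma>2 g h t Q P"
  by (simp add: DT_def min.commute)

lemma objective_swap: "objective N \<kappa> L D T d t P Q = objective N \<kappa> L D T d t Q P"
  by (simp add: objective_def add.commute)

lemma feasible_swap:
  "feasible N h g W \<sigma>2 L D T fB d t P Q \<longleftrightarrow> feasible N g h W \<sigma>2 L D T fB d t Q P"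
  unfolding feasible_def by (subst DT_swap) blast

lemma optimal_swap:
  "optimal N h g W \<sigma>2 \<kappa> L D T fB d t P Q \<longleftrightarrow> optimal N g h W \<sigma>2 \<kappa> L D T fB d t Q P"
  unfolding optimal_def by (metis feasible_swap objective_swap)

lemma DT_le_balanced_power:
  assumes "h \<noteq> 0"
  shows "DT W \<sigma>2 h g t P Q \<le> DT W \<sigma>2 h g t (Q * g / h) Q"
  using assms by (simp add: DT_def)

lemma feasible_balance_power:
  assumes "feasible N h g W \<sigma>2 L D T fB d t P Q" "n \<in> {1..N}" "h n > 0" "g n \<ge> 0"
  shows "feasible N h g W \<sigma>2 L D T fB d t (P(n := Q n * g n / h n)) Q"
proof -
  have "DT W \<sigma>2 (h k) (g k) (t k) (P k) (Q k)
      \<le> DT W \<sigma>2 (h k) (g k) (t k) ((P(n := Q n * g n / h n)) k) (Q k)" for k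
    using DT_le_balanced_power[of "h n"] \<open>h n > 0\<close> by (cases "k = n") auto
  then have "(\<Sum>k=1..N. DT W \<sigma>2 (h k) (g k) (t k) (P k) (Q k))
      \<le> (\<Sum>k=1..N. DT W \<sigma>2 (h k) (g k) (t k) ((P(n := Q n * g n / h n)) k) (Q k))"
    by (rule sum_mono)
  with assms show ?thesis
    by (auto simp: feasible_def)
qed

lemma objective_lower_power_less:
  assumes "n \<in> {1..N}" "t n > 0" "p < P n"
  shows "objective N \<kappa> L D T d t (P(n := p)) Q < objective N \<kappa> L D T d t P Q"
proof -
  have "(\<Sum>k=1..N. (P(n := p)) k * t k + Q k * t k) < (\<Sum>k=1..N. P k * t k + Q k * t k)"
    using assms by (intro sum_strict_mono_ex1) auto
  then show ?thesis
    by (simp add: objective_def)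
qed

lemma optimal_power_product_le:
  assumes "optimal N h g W \<sigma>2 \<kappa> L D T fB d t P Q"
    and "n \<in> {1..N}" "t n > 0" "h n > 0" "g n \<ge> 0"
  shows "P n * h n \<le> Q n * g n"
proof (rule ccontr)
  assume "\<not> P n * h n \<le> Q n * g n"
  with \<open>h n > 0\<close> have "Q n * g n / h n < P n"
    by (simp add: divide_less_eq)
  with assms(2,3) have "objective N \<kappa> L D T d t (P(n := Q n * g n / h n)) Q
      < objective N \<kappa> L D T d t P Q"
    by (rule objective_lower_power_less)
  moreover have "feasible N h g W \<sigma>2 L D T fB d t (P(n := Q n * g n / h n)) Q"
    using assms by (intro feasible_balance_power) (auto simp: optimal_def)
  ultimately show False
    using assms(1) by (force simp: optimal_def)
qed

theorem lemma1:
  fixes N :: nat and h g t P Q :: "nat \<Rightarrow> real"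
    and W \<sigma>2 \<kappa> L D T fB d :: real
  assumes "N > 0"
    and "\<forall>n\<in>{1..N}. h n > 0 \<and> g n > 0"
    and "W > 0" and "\<sigma>2 > 0" and "\<kappa> > 0" and "L > 0" and "D > 0" and "T > 0" and "fB > 0"
    and "optimal N h g W \<sigma>2 \<kappa> L D T fB d t P Q"
  shows "\<forall>n\<in>{1..N}. t n > 0 \<longrightarrow> P n * h n = Q n * g n"
proof (intro ballI impI)
  fix n assume n: "n \<in> {1..N}" and "t n > 0"
  with assms(2) have "h n > 0" "g n > 0" by auto
  have "P n * h n \<le> Q n * g n"
    using optimal_power_product_le[OF assms(10) n] \<open>t n > 0\<close> \<open>h n > 0\<close> \<open>g n > 0\<close> by simp
  moreover have "Q n * g n \<le> P n * h n"
    using optimal_power_product_le[OF assms(10)[THEN optimal_swap[THEN iffD1]] n]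
      \<open>t n > 0\<close> \<open>h n > 0\<close> \<open>g n > 0\<close> by simp
  ultimately show "P n * h n = Q n * g n" by simp
qed

end
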